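(* Assume $\delta_1:=\alpha_1-\alpha_2-\gamma_2>0$, $\delta_2:=\alpha_1-\alpha_3+\eta_1>0$ and $\frac{\mu_4'-\mu_0}{\alpha_1}<\frac12\sigma_1$. For $K>K^*:=\frac{b\sigma_1}{b-\mu_0}$ let $G_3(K)=(S^*,I_1^*,0,0,R^* )$ be the unique equilibrium of the system below with positive $S^*,I_1^*,R^*$, and define $$P_1(K)=\delta_1I_1^*+\alpha_2(\sigma_1-\sigma_2),\quad Q_1(K)=\delta_2I_1^*+\alpha_3(\sigma_1-\sigma_3),\quad U_1(K)=\beta_2(\gamma_1+\gamma_2)S^*I_1^*,$$ $\Delta_1(K)=P_1(K)Q_1(K)-U_1(K)$. Then $P_1$ and $Q_1$ are strictly increasing in $K$, $U_1$ is strictly increasing in $K$, and on every interval $J\subset(K^*,\infty)$ on which $P_1<0$ and $Q_1<0$, the function $\Delta_1$ is strictly decreasing. Moreover $\Delta_1(K)\to\alpha_2\alpha_3(\sigma_2-\sigma_1)(\sigma_3-\sigma_1)>0$ as $K\downarrow K^*$.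
   Context: Consider, for $t\ge0$, the system $S'=\big(b(1-\tfrac{N}{K})-\alpha_1I_1-\alpha_2I_2-(\beta_1+\beta_2+\alpha_3)I_{12}-\mu_0\big)S$, $I_1'=\big(b(1-\tfrac{N}{K})+\alpha_1S-\eta_1I_{12}-\gamma_1I_2-\mu_1\big)I_1+\beta_1SI_{12}$, $I_2'=\big(b(1-\tfrac{N}{K})+\alpha_2S-\eta_2I_{12}-\gamma_2I_1-\mu_2\big)I_2+\beta_2SI_{12}$, $I_{12}'=\big(b(1-\tfrac{N}{K})+\alpha_3S+\eta_1I_1+\eta_2I_2-\mu_3\big)I_{12}+(\gamma_1+\gamma_2)I_1I_2$, $R'=\big(b(1-\tfrac{N}{K})-\mu_4'\big)R+\rho_1I_1+\rho_2I_2+\rho_3I_{12}$, where $N=S+I_1+I_2+I_{12}+R$. All parameters $b,K,\alpha_i,\beta_i,\gamma_i,\eta_i,\rho_i,\mu_0,\mu_i'$ are positive and $\mu_i=\rho_i+\mu_i'$ for $i=1,2,3$; $K$ is regarded as a varying parameter, the others fixed. Standing assumptions: $b>\mu_0$, $b>\mu_i$ ($i=1,2,3$), $b>\mu_4'$, and $\mu_0<\mu_4'<\mu_j'$ for $j=1,2,3$. Set $\sigma_k=(\mu_k-\mu_0)/\alpha_k$ ($k=1,2,3$), assumed to satisfy $\sigma_1<\sigma_2<\sigma_3$, and $S^{**}=\frac{K}{b}(b-\mu_0)$. *)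

theory Defs
  imports "HOL-Analysis.Analysis"
begin

text \<open>Fixed (non-K) parameters of the model. The paper's mu_i' (i=1..4) are
 mup1..mup4, and mu_i = rho_i + mu_i' for i = 1,2,3.\<close>
record params =
  pb :: real
  al1 :: real  al2 :: real  al3 :: real
  be1 :: real  be2 :: real
  ga1 :: real  ga2 :: real
  et1 :: real  et2 :: real
  rh1 :: real  rh2 :: real  rh3 :: real
  mu0 :: real
  mup1 :: real  mup2 :: real  mup3 :: real  mup4 :: real

definition mu1 :: "params \<Rightarrow> real" where "mu1 p = rh1 p + mup1 p"
definition mu2 :: "params \<Rightarrow> real" where "mu2 p = rh2 p + mup2 p"
definition mu3 :: "params \<Rightarrow> real" where "mu3 p = rh3 p + mup3 p"

definition sig1 :: "params \<Rightarrow> real" where "sig1 p = (mu1 p - mu0 p) / al1 p"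
definition sig2 :: "params \<Rightarrow> real" where "sig2 p = (mu2 p - mu0 p) / al2 p"
definition sig3 :: "params \<Rightarrow> real" where "sig3 p = (mu3 p - mu0 p) / al3 p"

definition rhs :: "params \<Rightarrow> real \<Rightarrow> real \<times> real \<times> real \<times> real \<times> real
                   \<Rightarrow> real \<times> real \<times> real \<times> real \<times> real" where
  "rhs p K x = (case x of (S, I1, I2, I12, R) \<Rightarrow>
     (let N = S + I1 + I2 + I12 + R; g = pb p * (1 - N / K) in
      ((g - al1 p * I1 - al2 p * I2 - (be1 p + be2 p + al3 p) * I12 - mu0 p) * S,
       (g + al1 p * S - et1 p * I12 - ga1 p * I2 - mu1 p) * I1 + be1 p * S * I12,
       (g + al2 p * S - et2 p * I12 - ga2 p * I1 - mu2 p) * I2 + be2 p * S * I12,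
       (g + al3 p * S + et1 p * I1 + et2 p * I2 - mu3 p) * I12 + (ga1 p + ga2 p) * I1 * I2,
       (g - mup4 p) * R + rh1 p * I1 + rh2 p * I2 + rh3 p * I12)))"

definition is_equilibrium :: "params \<Rightarrow> real \<Rightarrow> real \<times> real \<times> real \<times> real \<times> real \<Rightarrow> bool" where
  "is_equilibrium p K x \<longleftrightarrow> rhs p K x = (0, 0, 0, 0, 0)"

definition Kstar :: "params \<Rightarrow> real" where
  "Kstar p = pb p * sig1 p / (pb p - mu0 p)"

definition G3 :: "params \<Rightarrow> real \<Rightarrow> real \<times> real \<times> real" where
  "G3 p K = (THE (S, I1, R). S > 0 \<and> I1 > 0 \<and> R > 0 \<and> is_equilibrium p K (S, I1, 0, 0, R))"

definition Sst :: "params \<Rightarrow> real \<Rightarrow> real" where "Sst p K = fst (G3 p K)"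
definition I1st :: "params \<Rightarrow> real \<Rightarrow> real" where "I1st p K = fst (snd (G3 p K))"

definition P1 :: "params \<Rightarrow> real \<Rightarrow> real" where
  "P1 p K = (al1 p - al2 p - ga2 p) * I1st p K + al2 p * (sig1 p - sig2 p)"
definition Q1 :: "params \<Rightarrow> real \<Rightarrow> real" where
  "Q1 p K = (al1 p - al3 p + et1 p) * I1st p K + al3 p * (sig1 p - sig3 p)"
definition U1 :: "params \<Rightarrow> real \<Rightarrow> real" where
  "U1 p K = be2 p * (ga1 p + ga2 p) * Sst p K * I1st p K"
definition Delta1 :: "params \<Rightarrow> real \<Rightarrow> real" where
  "Delta1 p K = P1 p K * Q1 p K - U1 p K"

end

theory Submission
  imports Defs
begin

text \<open>On the face \<open>I\<^sub>2 = I\<^sub>1\<^sub>2 = 0\<close> the equations for \<open>S\<close> and \<open>I\<^sub>1\<close> force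
  \<open>S + I\<^sub>1 = \<sigma>\<^sub>1\<close> and \<open>b(1 - N/K) = \<mu>\<^sub>0 + \<alpha>\<^sub>1 I\<^sub>1\<close>, and the \<open>R\<close>-equation expresses \<open>R\<close> as an
  increasing function of \<open>I\<^sub>1\<close>. The equilibrium \<open>G\<^sub>3(K)\<close> is therefore the root of
  \<open>I \<mapsto> b(1 - (\<sigma>\<^sub>1 + R(I))/K) - \<mu>\<^sub>0 - \<alpha>\<^sub>1 I\<close>, which is decreasing in \<open>I\<close> and increasing in \<open>K\<close>.
  Hence \<open>I\<^sub>1\<^sup>*\<close> increases with \<open>K\<close> and tends to \<open>0\<close> as \<open>K \<down> K\<^sup>*\<close>. The claims about
  \<open>P\<^sub>1, Q\<^sub>1\<close> follow at once, \<open>U\<^sub>1\<close> is a multiple of \<open>(\<sigma>\<^sub>1 - I\<^sub>1\<^sup>*) I\<^sub>1\<^sup>*\<close> with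
  \<open>I\<^sub>1\<^sup>* < \<sigma>\<^sub>1/2\<close>, and the limit of \<open>\<Delta>\<^sub>1\<close> is its value at \<open>I\<^sub>1\<^sup>* = 0\<close>.\<close>

lemma mult_complement_strict_mono:
  fixes s x y :: real
  assumes "0 < x" "x < y" "y < s / 2"
  shows "(s - x) * x < (s - y) * y"
proof -
  have "(y - x) * (s - x - y) > 0" using assms by simp
  then show ?thesis by (simp add: algebra_simps)
qed

lemma neg_mult_diff_strict_antimono:
  fixes a a' c c' u u' :: real
  assumes "a < a'" "c < c'" "a' < 0" "c' < 0" "u < u'"
  shows "a' * c' - u' < a * c - u"
proof -
  have "(- a') * (- c') < (- a) * (- c)"
    using assms by (intro mult_strict_mono) auto
  then show ?thesis using assms(5) by simp
qed

lemma is_equilibrium_face_iff: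
  "is_equilibrium p K (S, I, 0, 0, R) \<longleftrightarrow>
    (pb p * (1 - (S + I + R) / K) - al1 p * I - mu0 p) * S = 0 \<and>
    (pb p * (1 - (S + I + R) / K) + al1 p * S - mu1 p) * I = 0 \<and>
    (pb p * (1 - (S + I + R) / K) - mup4 p) * R + rh1 p * I = 0"
  by (simp add: is_equilibrium_def rhs_def Let_def)

text \<open>\<open>R_face p I\<close> is the solution of the \<open>R\<close>-equation once \<open>b(1 - N/K) = \<mu>\<^sub>0 + \<alpha>\<^sub>1 I\<close>;
  with \<open>N = \<sigma>\<^sub>1 + R\<close> the \<open>S\<close>-equation becomes \<open>face_growth p K I = 0\<close>.\<close>

definition R_face :: "params \<Rightarrow> real \<Rightarrow> real" where
  "R_face p I = rh1 p * I / (mup4 p - mu0 p - al1 p * I)"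

definition face_growth :: "params \<Rightarrow> real \<Rightarrow> real \<Rightarrow> real" where
  "face_growth p K I = pb p * (1 - (sig1 p + R_face p I) / K) - mu0 p - al1 p * I"

locale G3_regime =
  fixes p :: params
  assumes al1_pos: "al1 p > 0" and rh1_pos: "rh1 p > 0"
    and pb_pos: "pb p > 0" and pb_gt_mu0: "pb p > mu0 p"
    and mu0_less_mup4: "mu0 p < mup4 p" and mup4_less_mup1: "mup4 p < mup1 p"
    and small: "(mup4 p - mu0 p) / al1 p < sig1 p / 2"
begin

lemma sig1_pos: "sig1 p > 0"
  using al1_pos mu0_less_mup4 mup4_less_mup1 rh1_pos by (simp add: sig1_def mu1_def)

lemma Kstar_pos: "Kstar p > 0"
  using sig1_pos pb_gt_mu0 pb_pos by (simp add: Kstar_def)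

lemma R_face_nonneg:
  assumes "0 \<le> I" "al1 p * I < mup4 p - mu0 p"
  shows "R_face p I \<ge> 0"
  using assms rh1_pos by (simp add: R_face_def)

lemma face_equilibrium_iff:
  assumes S: "S > 0" and I: "I > 0" and R: "R > 0"
  shows "is_equilibrium p K (S, I, 0, 0, R) \<longleftrightarrow>
    S = sig1 p - I \<and> al1 p * I < mup4 p - mu0 p \<and> R = R_face p I \<and> face_growth p K I = 0"
proof
  define g where "g = pb p * (1 - (S + I + R) / K)"
  assume "is_equilibrium p K (S, I, 0, 0, R)"
  then have e1: "(g - al1 p * I - mu0 p) * S = 0" and e2: "(g + al1 p * S - mu1 p) * I = 0"
    and e3: "(g - mup4 p) * R + rh1 p * I = 0"
    by (simp_all add: is_equilibrium_face_iff g_def)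
  from e1 S have g1: "g = al1 p * I + mu0 p" by simp
  from e2 I have "g + al1 p * S = mu1 p" by simp
  with g1 have "al1 p * (S + I) = mu1 p - mu0 p" by (simp add: algebra_simps)
  then have SI: "S = sig1 p - I" using al1_pos by (simp add: sig1_def field_simps)
  have "g < mup4 p"
  proof (rule ccontr)
    assume "\<not> g < mup4 p"
    then have "(g - mup4 p) * R \<ge> 0" using R by simp
    moreover have "rh1 p * I > 0" using rh1_pos I by simp
    ultimately show False using e3 by linarith
  qed
  then have lt: "al1 p * I < mup4 p - mu0 p" using g1 by simp
  have "R * (mup4 p - g) = rh1 p * I" using e3 by (simp add: algebra_simps)
  then have RI: "R = R_face p I" using lt g1 by (simp add: R_face_def field_simps)
  have "face_growth p K I = 0"
    using g1 by (simp add: face_growth_def g_def SI RI)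
  then show "S = sig1 p - I \<and> al1 p * I < mup4 p - mu0 p \<and> R = R_face p I \<and> face_growth p K I = 0"
    using SI lt RI by simp
next
  assume "S = sig1 p - I \<and> al1 p * I < mup4 p - mu0 p \<and> R = R_face p I \<and> face_growth p K I = 0"
  then have SI: "S + I = sig1 p" and lt: "al1 p * I < mup4 p - mu0 p"
    and RI: "R = R_face p I" and root: "face_growth p K I = 0" by auto
  have g: "pb p * (1 - (S + I + R) / K) = mu0 p + al1 p * I"
    using root by (simp add: face_growth_def SI RI)
  have "mu0 p + al1 p * I + al1 p * S - mu1 p = 0"
    using al1_pos SI by (simp add: sig1_def field_simps)
  moreover have "(mu0 p + al1 p * I - mup4 p) * R + rh1 p * I = 0"
    using lt by (simp add: RI R_face_def field_simps)
  ultimately show "is_equilibrium p K (S, I, 0, 0, R)"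
    unfolding is_equilibrium_face_iff g by simp
qed

lemma face_growth_strict_antimono:
  assumes K: "K > 0" and I: "0 \<le> I" "I < I'" and I': "al1 p * I' < mup4 p - mu0 p"
  shows "face_growth p K I' < face_growth p K I"
proof -
  have "R_face p I \<le> R_face p I'"
    unfolding R_face_def using I I' al1_pos rh1_pos by (intro frac_le) auto
  then have "pb p * (sig1 p + R_face p I) / K \<le> pb p * (sig1 p + R_face p I') / K"
    using K pb_pos by (simp add: divide_right_mono)
  moreover have "al1 p * I < al1 p * I'" using I al1_pos by simp
  ultimately show ?thesis by (simp add: face_growth_def algebra_simps)
qed

lemma face_growth_strict_mono_K:
  assumes K: "0 < K" "K < K'" and I: "0 \<le> I" "al1 p * I < mup4 p - mu0 p"
  shows "face_growth p K I < face_growth p K' I"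
proof -
  have "sig1 p + R_face p I > 0" using sig1_pos R_face_nonneg[OF I] by simp
  then have "(sig1 p + R_face p I) / K' < (sig1 p + R_face p I) / K"
    using K by (simp add: frac_less2)
  then show ?thesis using pb_pos by (simp add: face_growth_def)
qed

lemma face_growth_add_le:
  assumes K: "K > 0" and I: "0 \<le> I" "al1 p * I < mup4 p - mu0 p"
  shows "face_growth p K I + al1 p * I \<le> face_growth p K 0"
proof -
  have "0 \<le> pb p * R_face p I / K" using K pb_pos R_face_nonneg[OF I] by simp
  then show ?thesis by (simp add: face_growth_def R_face_def algebra_simps add_divide_distrib)
qed

lemma face_growth_root_exists:
  assumes K: "K > Kstar p"
  shows "\<exists>I > 0. al1 p * I < mup4 p - mu0 p \<and> face_growth p K I = 0"
proof -
  define c' where "c' = mup4 p - mu0 p"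
  define c where "c = c' / al1 p"
  have c'_pos: "c' > 0" using mu0_less_mup4 by (simp add: c'_def)
  have c_pos: "c > 0" and al1_c: "al1 p * c = c'"
    using c'_pos al1_pos by (simp_all add: c_def)
  have K_pos: "K > 0" using K Kstar_pos by simp
  text \<open>\<open>h\<close> is \<open>face_growth p K\<close> multiplied by the negative factor \<open>-K (c' - \<alpha>\<^sub>1 x)\<close>,
    which removes the pole of \<open>R_face\<close> at \<open>x = c\<close>.\<close>
  define h where "h x = pb p * (sig1 p * (c' - al1 p * x) + rh1 p * x)
      - K * (pb p - mu0 p - al1 p * x) * (c' - al1 p * x)" for x
  have h_eq: "h x = - K * (c' - al1 p * x) * face_growth p K x" if "c' - al1 p * x \<noteq> 0" for x
  proof -
    have R: "R_face p x * (c' - al1 p * x) = rh1 p * x"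
      using that by (simp add: R_face_def c'_def)
    have "K * face_growth p K x = K * (pb p - mu0 p - al1 p * x) - pb p * (sig1 p + R_face p x)"
      using K_pos by (simp add: face_growth_def field_simps)
    then have "K * (c' - al1 p * x) * face_growth p K x
        = (c' - al1 p * x) * (K * (pb p - mu0 p - al1 p * x) - pb p * (sig1 p + R_face p x))"
      by (metis mult.commute mult.left_commute)
    also have "\<dots> = - h x"
      using R by (simp add: h_def algebra_simps)
    finally show ?thesis by simp
  qed
  have "K * (pb p - mu0 p) > pb p * sig1 p"
    using K pb_gt_mu0 by (simp add: Kstar_def field_simps)
  then have "c' * (pb p * sig1 p) < c' * (K * (pb p - mu0 p))"
    using c'_pos by (rule mult_strict_left_mono)
  then have h0: "h 0 < 0" by (simp add: h_def algebra_simps)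
  have hc: "h c > 0" using al1_c pb_pos rh1_pos c_pos by (simp add: h_def)
  have "continuous_on {0..c} h" unfolding h_def by (intro continuous_intros)
  then obtain x where x: "0 \<le> x" "x \<le> c" "h x = 0"
    using IVT'[of h 0 0 c] h0 hc c_pos by auto
  have x_pos: "x > 0" using x h0 by (cases "x = 0") auto
  have "x < c" using x hc by (cases "x = c") auto
  then have x_lt: "al1 p * x < c'" using al1_pos al1_c by (metis mult_strict_left_mono)
  then have "face_growth p K x = 0" using h_eq[of x] x(3) K_pos by simp
  then show ?thesis using x_pos x_lt by (auto simp: c'_def)
qed

lemma I1st_face_root:
  assumes K: "K > Kstar p"
  shows "I1st p K > 0" "al1 p * I1st p K < mup4 p - mu0 p"
    "face_growth p K (I1st p K) = 0" "Sst p K = sig1 p - I1st p K"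
proof -
  have K_pos: "K > 0" using K Kstar_pos by simp
  obtain I where I: "I > 0" "al1 p * I < mup4 p - mu0 p" "face_growth p K I = 0"
    using face_growth_root_exists[OF K] by blast
  have "I < (mup4 p - mu0 p) / al1 p" using I(2) al1_pos by (simp add: field_simps)
  then have S_pos: "sig1 p - I > 0" using small sig1_pos by linarith
  have R_pos: "R_face p I > 0" using I(1,2) rh1_pos by (simp add: R_face_def)
  have root_unique: "I' = I"
    if "I' > 0" "al1 p * I' < mup4 p - mu0 p" "face_growth p K I' = 0" for I'
    using face_growth_strict_antimono[OF K_pos, of I I'] face_growth_strict_antimono[OF K_pos, of I' I]
      that I by (cases I I' rule: linorder_cases) auto
  have "G3 p K = (sig1 p - I, I, R_face p I)"
    unfolding G3_def
  proof (rule the_equality)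
    show "case (sig1 p - I, I, R_face p I) of (S, I1, R) \<Rightarrow>
        S > 0 \<and> I1 > 0 \<and> R > 0 \<and> is_equilibrium p K (S, I1, 0, 0, R)"
      using face_equilibrium_iff[OF S_pos I(1) R_pos] S_pos I R_pos by simp
  next
    fix t assume t: "case t of (S, I1, R) \<Rightarrow>
        S > 0 \<and> I1 > 0 \<and> R > 0 \<and> is_equilibrium p K (S, I1, 0, 0, R)"
    obtain S' I' R' where t_eq: "t = (S', I', R')" by (cases t)
    with t have "S' = sig1 p - I'" "R' = R_face p I'" "I' = I"
      using face_equilibrium_iff root_unique by auto
    then show "t = (sig1 p - I, I, R_face p I)" by (simp add: t_eq)
  qed
  then show "I1st p K > 0" "al1 p * I1st p K < mup4 p - mu0 p"
    "face_growth p K (I1st p K) = 0" "Sst p K = sig1 p - I1st p K"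
    using I by (simp_all add: I1st_def Sst_def)
qed

lemma I1st_less_half_sig1:
  assumes "K > Kstar p"
  shows "I1st p K < sig1 p / 2"
proof -
  have "I1st p K < (mup4 p - mu0 p) / al1 p"
    using I1st_face_root(2)[OF assms] al1_pos by (simp add: field_simps)
  then show ?thesis using small by linarith
qed

lemma I1st_strict_mono:
  assumes K: "Kstar p < K" "K < K'"
  shows "I1st p K < I1st p K'"
proof (rule ccontr)
  assume "\<not> I1st p K < I1st p K'"
  have K': "Kstar p < K'" and K_pos: "0 < K" using K Kstar_pos by simp_all
  note G = I1st_face_root[OF K(1)] and G' = I1st_face_root[OF K']
  have "face_growth p K (I1st p K) < face_growth p K' (I1st p K)"
    using face_growth_strict_mono_K[OF K_pos K(2)] G(1,2) by simp
  also have "\<dots> \<le> face_growth p K' (I1st p K')"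
    using face_growth_strict_antimono[of K' "I1st p K'" "I1st p K"] \<open>\<not> I1st p K < I1st p K'\<close>
      G(2) G'(1) K_pos K(2) by (cases "I1st p K = I1st p K'") auto
  finally show False using G(3) G'(3) by simp
qed

lemma I1st_tendsto_0: "(I1st p \<longlongrightarrow> 0) (at_right (Kstar p))"
proof -
  have ev: "\<forall>\<^sub>F K in at_right (Kstar p). Kstar p < K" by (rule eventually_at_right_less)
  have "((\<lambda>K. (pb p * (1 - sig1 p / K) - mu0 p) / al1 p) \<longlongrightarrow>
      (pb p * (1 - sig1 p / Kstar p) - mu0 p) / al1 p) (at_right (Kstar p))"
    using Kstar_pos al1_pos by (intro tendsto_intros) auto
  moreover have "pb p * (1 - sig1 p / Kstar p) - mu0 p = 0"
    using pb_gt_mu0 sig1_pos pb_pos by (simp add: Kstar_def field_simps)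
  ultimately have upper: "((\<lambda>K. face_growth p K 0 / al1 p) \<longlongrightarrow> 0) (at_right (Kstar p))"
    by (simp add: face_growth_def R_face_def)
  show ?thesis
  proof (rule tendsto_sandwich[OF _ _ tendsto_const upper])
    show "\<forall>\<^sub>F K in at_right (Kstar p). 0 \<le> I1st p K"
      using ev by eventually_elim (simp add: I1st_face_root(1) less_imp_le)
    show "\<forall>\<^sub>F K in at_right (Kstar p). I1st p K \<le> face_growth p K 0 / al1 p"
    proof (rule eventually_mono[OF ev])
      fix K assume K: "Kstar p < K"
      note G = I1st_face_root[OF K]
      have "al1 p * I1st p K \<le> face_growth p K 0"
        using face_growth_add_le[of K "I1st p K"] G K Kstar_pos by simp
      then show "I1st p K \<le> face_growth p K 0 / al1 p"
        using al1_pos by (simp add: field_simps)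
    qed
  qed
qed

lemma P1_strict_mono:
  assumes "al1 p - al2 p - ga2 p > 0"
  shows "strict_mono_on {Kstar p<..} (P1 p)"
  using I1st_strict_mono assms by (auto simp: strict_mono_on_def P1_def)

lemma Q1_strict_mono:
  assumes "al1 p - al3 p + et1 p > 0"
  shows "strict_mono_on {Kstar p<..} (Q1 p)"
  using I1st_strict_mono assms by (auto simp: strict_mono_on_def Q1_def)

lemma U1_strict_mono:
  assumes "be2 p * (ga1 p + ga2 p) > 0"
  shows "strict_mono_on {Kstar p<..} (U1 p)"
proof (rule strict_mono_onI)
  fix K K' assume "K \<in> {Kstar p<..}" "K' \<in> {Kstar p<..}" "K < K'"
  then have K: "Kstar p < K" "K < K'" by auto
  then have "(sig1 p - I1st p K) * I1st p K < (sig1 p - I1st p K') * I1st p K'"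
    using mult_complement_strict_mono I1st_face_root(1) I1st_strict_mono I1st_less_half_sig1
    by (meson less_trans)
  then have "be2 p * (ga1 p + ga2 p) * ((sig1 p - I1st p K) * I1st p K)
      < be2 p * (ga1 p + ga2 p) * ((sig1 p - I1st p K') * I1st p K')"
    using assms by (rule mult_strict_left_mono)
  then show "U1 p K < U1 p K'"
    using I1st_face_root(4) K by (simp add: U1_def mult.assoc)
qed

lemma Delta1_tendsto:
  "(Delta1 p \<longlongrightarrow> al2 p * al3 p * (sig2 p - sig1 p) * (sig3 p - sig1 p)) (at_right (Kstar p))"
proof -
  define F where "F x = ((al1 p - al2 p - ga2 p) * x + al2 p * (sig1 p - sig2 p)) *
      ((al1 p - al3 p + et1 p) * x + al3 p * (sig1 p - sig3 p))
      - be2 p * (ga1 p + ga2 p) * (sig1 p - x) * x" for x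
  have "((\<lambda>K. F (I1st p K)) \<longlongrightarrow> F 0) (at_right (Kstar p))"
    unfolding F_def by (intro tendsto_intros I1st_tendsto_0)
  moreover have "F 0 = al2 p * al3 p * (sig2 p - sig1 p) * (sig3 p - sig1 p)"
    by (simp add: F_def algebra_simps)
  moreover have "\<forall>\<^sub>F K in at_right (Kstar p). F (I1st p K) = Delta1 p K"
    using eventually_at_right_less
    by (rule eventually_mono) (simp add: I1st_face_root(4) F_def Delta1_def P1_def Q1_def U1_def)
  ultimately show ?thesis using Lim_transform_eventually by fastforce
qed

end

theorem mainTheorem12:
  fixes p :: params
  assumes pos: "pb p > 0" "al1 p > 0" "al2 p > 0" "al3 p > 0" "be1 p > 0" "be2 p > 0"
      "ga1 p > 0" "ga2 p > 0" "et1 p > 0" "et2 p > 0" "rh1 p > 0" "rh2 p > 0" "rh3 p > 0"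
      "mu0 p > 0" "mup1 p > 0" "mup2 p > 0" "mup3 p > 0" "mup4 p > 0"
    and b_gt: "pb p > mu0 p" "pb p > mu1 p" "pb p > mu2 p" "pb p > mu3 p" "pb p > mup4 p"
    and mu_ord: "mu0 p < mup4 p" "mup4 p < mup1 p" "mup4 p < mup2 p" "mup4 p < mup3 p"
    and sig_ord: "sig1 p < sig2 p" "sig2 p < sig3 p"
    and delta1: "al1 p - al2 p - ga2 p > 0"
    and delta2: "al1 p - al3 p + et1 p > 0"
    and small: "(mup4 p - mu0 p) / al1 p < sig1 p / 2"
  shows "strict_mono_on {Kstar p<..} (P1 p)
       \<and> strict_mono_on {Kstar p<..} (Q1 p)
       \<and> strict_mono_on {Kstar p<..} (U1 p)
       \<and> (\<forall>J. is_interval J \<and> J \<subseteq> {Kstar p<..} \<and> (\<forall>K\<in>J. P1 p K < 0 \<and> Q1 p K < 0)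
              \<longrightarrow> (\<forall>K\<in>J. \<forall>K'\<in>J. K < K' \<longrightarrow> Delta1 p K' < Delta1 p K))
       \<and> (Delta1 p \<longlongrightarrow> al2 p * al3 p * (sig2 p - sig1 p) * (sig3 p - sig1 p)) (at_right (Kstar p))
       \<and> al2 p * al3 p * (sig2 p - sig1 p) * (sig3 p - sig1 p) > 0"
proof -
  interpret G3_regime p
    using pos(1,2,11) b_gt(1) mu_ord(1,2) small by unfold_locales
  have P: "strict_mono_on {Kstar p<..} (P1 p)" using P1_strict_mono delta1 .
  have Q: "strict_mono_on {Kstar p<..} (Q1 p)" using Q1_strict_mono delta2 .
  have U: "strict_mono_on {Kstar p<..} (U1 p)" using U1_strict_mono pos(6-8) by simp
  have "Delta1 p K' < Delta1 p K"
    if "J \<subseteq> {Kstar p<..}" "\<forall>K\<in>J. P1 p K < 0 \<and> Q1 p K < 0" "K \<in> J" "K' \<in> J" "K < K'"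
    for J K K'
    using that strict_mono_onD[OF P] strict_mono_onD[OF Q] strict_mono_onD[OF U]
    unfolding Delta1_def by (intro neg_mult_diff_strict_antimono) auto
  then show ?thesis
    using P Q U Delta1_tendsto pos(3,4) sig_ord by auto
qed

end
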